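(* Let $N$ be a finitely generated torsion-free nilpotent group and let $\phi\in\mathrm{Aut}(N)$ be homologically trivial, i.e. $\phi$ induces the identity on $H_1(N,\mathbb{Z})$. Then $K_{\phi}=1$.
   Context: For a finitely generated group $G$ with finite generating set $S$, $\ell=\ell_S$ denotes word length with respect to $S$. For $\phi\in\mathrm{Aut}(G)$, the entropy of $\phi$ is $K_{\phi}=\max_{s\in S}\lim_{n\to\infty}\ell(\phi^n(s))^{1/n}$; it is independent of $S$. *)

theory Defs
  imports "HOL-Analysis.Analysis" "HOL-Algebra.Algebra"
begin

fun lower_central :: "('a, 'b) monoid_scheme \<Rightarrow> nat \<Rightarrow> 'a set" where
  "lower_central G 0 = carrier G"
| "lower_central G (Suc i) =
     generate G (\<Union>g \<in> carrier G. \<Union>h \<in> lower_central G i.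
        {g \<otimes>\<^bsub>G\<^esub> h \<otimes>\<^bsub>G\<^esub> inv\<^bsub>G\<^esub> g \<otimes>\<^bsub>G\<^esub> inv\<^bsub>G\<^esub> h})"

definition nilpotent_group :: "('a, 'b) monoid_scheme \<Rightarrow> bool" where
  "nilpotent_group G \<longleftrightarrow> group G \<and> (\<exists>c. lower_central G c = {\<one>\<^bsub>G\<^esub>})"

definition torsion_free :: "('a, 'b) monoid_scheme \<Rightarrow> bool" where
  "torsion_free G \<longleftrightarrow>
     (\<forall>x \<in> carrier G. \<forall>n::nat. n > 0 \<longrightarrow> x [^]\<^bsub>G\<^esub> n = \<one>\<^bsub>G\<^esub> \<longrightarrow> x = \<one>\<^bsub>G\<^esub>)"

definition finite_generating_set :: "('a, 'b) monoid_scheme \<Rightarrow> 'a set \<Rightarrow> bool" where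
  "finite_generating_set G S \<longleftrightarrow> finite S \<and> S \<subseteq> carrier G \<and> generate G S = carrier G"

definition finitely_generated :: "('a, 'b) monoid_scheme \<Rightarrow> bool" where
  "finitely_generated G \<longleftrightarrow> (\<exists>S. finite_generating_set G S)"

definition word_length :: "('a, 'b) monoid_scheme \<Rightarrow> 'a set \<Rightarrow> 'a \<Rightarrow> nat" where
  "word_length G S g = (LEAST n. \<exists>ws. length ws = n \<and> set ws \<subseteq> S \<union> m_inv G ` S
                                     \<and> foldr (\<otimes>\<^bsub>G\<^esub>) ws \<one>\<^bsub>G\<^esub> = g)"

text \<open>phi induces the identity on H_1(N,Z) = N/[N,N].\<close>
definition homologically_trivial :: "('a, 'b) monoid_scheme \<Rightarrow> ('a \<Rightarrow> 'a) \<Rightarrow> bool" where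
  "homologically_trivial G \<phi> \<longleftrightarrow>
     (\<forall>x \<in> carrier G. \<phi> x \<otimes>\<^bsub>G\<^esub> inv\<^bsub>G\<^esub> x \<in> derived G (carrier G))"

definition entropy_seq :: "('a, 'b) monoid_scheme \<Rightarrow> 'a set \<Rightarrow> ('a \<Rightarrow> 'a) \<Rightarrow> 'a \<Rightarrow> nat \<Rightarrow> real" where
  "entropy_seq G S \<phi> s n = root n (real (word_length G S ((\<phi> ^^ n) s)))"

definition entropy :: "('a, 'b) monoid_scheme \<Rightarrow> 'a set \<Rightarrow> ('a \<Rightarrow> 'a) \<Rightarrow> real" where
  "entropy G S \<phi> = Max ((\<lambda>s. lim (entropy_seq G S \<phi> s)) ` S)"

end

theory Submission
  imports Defs
begin

(*
  Let N be a nilpotent group with lower central series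
  N = gamma_0 > gamma_1 > ... > gamma_c = 1, generated by a finite set S, and let
  f be an endomorphism acting trivially on N / gamma_1 = H_1(N, Z), i.e. the
  "displacement" f(x) x^-1 lies in gamma_1 for every x.

  1. Commutator calculus: the gamma_i are normal subgroups, and the three
     subgroup lemma [gamma_i, gamma_j] <= gamma_(i+j+1) holds (via Hall-Witt).
  2. Descent of displacements: if x is in gamma_j then f(x) x^-1 is in gamma_(j+1).
  3. Word length is subadditive, so writing f^(n+1)(x) = f^n(f(x) x^-1) f^n(x)
     and descending through the series gives |f^n(x)|_S <= A (n+1)^(c-k) for
     x in gamma_k; in particular the word length of f^n(s) grows polynomially.
  4. The n-th root of a sequence that is >= 1 and polynomially bounded tends to 1.
  Hence every generator s <> 1 has lim |f^n(s)|^(1/n) = 1 (while s = 1 gives 0),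
  and since a nontrivial group has a nontrivial generator the entropy is 1.
*)

section \<open>Commutators and the lower central series\<close>

definition commutator :: "('a, 'b) monoid_scheme \<Rightarrow> 'a \<Rightarrow> 'a \<Rightarrow> 'a" where
  "commutator G x y = x \<otimes>\<^bsub>G\<^esub> y \<otimes>\<^bsub>G\<^esub> inv\<^bsub>G\<^esub> x \<otimes>\<^bsub>G\<^esub> inv\<^bsub>G\<^esub> y"

definition commutators_with :: "('a, 'b) monoid_scheme \<Rightarrow> 'a set \<Rightarrow> 'a set" where
  "commutators_with G H = (\<Union>g \<in> carrier G. \<Union>h \<in> H. {commutator G g h})"

lemma lower_central_Suc:
  "lower_central G (Suc i) = generate G (commutators_with G (lower_central G i))"
  by (simp add: commutators_with_def commutator_def)

declare lower_central.simps(2) [simp del]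

context group
begin

lemma mult_inv_cancel_left [simp]: "x \<in> carrier G \<Longrightarrow> y \<in> carrier G \<Longrightarrow> x \<otimes> (inv x \<otimes> y) = y"
  by (simp flip: m_assoc)

lemma inv_mult_cancel_left [simp]: "x \<in> carrier G \<Longrightarrow> y \<in> carrier G \<Longrightarrow> inv x \<otimes> (x \<otimes> y) = y"
  by (simp flip: m_assoc)

lemmas word_normalize = m_assoc inv_mult_group commutator_def

lemma commutator_closed [simp]:
  "x \<in> carrier G \<Longrightarrow> y \<in> carrier G \<Longrightarrow> commutator G x y \<in> carrier G"
  by (simp add: commutator_def)

lemma inv_commutator: "x \<in> carrier G \<Longrightarrow> y \<in> carrier G \<Longrightarrow> inv (commutator G x y) = commutator G y x"
  by (simp add: word_normalize)

lemma commutators_with_in_carrier: "H \<subseteq> carrier G \<Longrightarrow> commutators_with G H \<subseteq> carrier G"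
  by (auto simp: commutators_with_def)

lemma lower_central_in_carrier: "lower_central G i \<subseteq> carrier G"
proof (induction i)
  case (Suc i) show ?case
    unfolding lower_central_Suc by (rule generate_incl[OF commutators_with_in_carrier[OF Suc.IH]])
qed simp

lemma lower_central_mem_carrier [simp]: "x \<in> lower_central G i \<Longrightarrow> x \<in> carrier G"
  using lower_central_in_carrier by blast

lemma lower_central_subgroup: "subgroup (lower_central G i) G"
proof (cases i)
  case (Suc j) show ?thesis unfolding Suc lower_central_Suc
    by (rule generate_is_subgroup[OF commutators_with_in_carrier[OF lower_central_in_carrier]])
qed (simp add: subgroup_self)

lemma commutator_mem_lower_central:
  "g \<in> carrier G \<Longrightarrow> h \<in> lower_central G i \<Longrightarrow> commutator G g h \<in> lower_central G (Suc i)"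
  unfolding lower_central_Suc commutators_with_def by (rule generate.incl) auto

lemma generate_normal:
  assumes H: "H \<subseteq> carrier G"
    and conj: "\<And>x h. x \<in> carrier G \<Longrightarrow> h \<in> H \<Longrightarrow> x \<otimes> h \<otimes> inv x \<in> H"
  shows "generate G H \<lhd> G"
  unfolding normal_inv_iff
proof (intro conjI ballI)
  show "subgroup (generate G H) G" using generate_is_subgroup[OF H] .
  fix x y assume x: "x \<in> carrier G" and y: "y \<in> generate G H"
  from y show "x \<otimes> y \<otimes> inv x \<in> generate G H"
  proof (induction y rule: generate.induct)
    case one then show ?case using x by (simp add: generate.one)
  next
    case (incl h) then show ?case using conj x by (simp add: generate.incl)
  next
    case (inv h)
    have "x \<otimes> inv h \<otimes> inv x = inv (x \<otimes> h \<otimes> inv x)"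
      using x inv H by (auto simp: word_normalize)
    then show ?case using conj x inv by (simp add: generate.inv)
  next
    case (eng h1 h2)
    have "h1 \<in> carrier G" "h2 \<in> carrier G" using eng.hyps generate_in_carrier H by blast+
    then have "x \<otimes> (h1 \<otimes> h2) \<otimes> inv x = (x \<otimes> h1 \<otimes> inv x) \<otimes> (x \<otimes> h2 \<otimes> inv x)"
      using x by (simp add: word_normalize)
    then show ?case using eng by (simp add: generate.eng)
  qed
qed

text \<open>Each gamma_i is normal, since conjugation maps commutators to commutators.\<close>
lemma lower_central_normal: "lower_central G i \<lhd> G"
proof (induction i)
  case 0 then show ?case by (simp add: normal_inv_iff subgroup_self)
next
  case (Suc i)
  have conj: "x \<otimes> c \<otimes> inv x \<in> commutators_with G (lower_central G i)"
    if x: "x \<in> carrier G" and c: "c \<in> commutators_with G (lower_central G i)" for x c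
  proof -
    obtain g h where gh: "g \<in> carrier G" "h \<in> lower_central G i" "c = commutator G g h"
      using c by (auto simp: commutators_with_def)
    have "x \<otimes> c \<otimes> inv x = commutator G (x \<otimes> g \<otimes> inv x) (x \<otimes> h \<otimes> inv x)"
      using gh x by (simp add: word_normalize)
    moreover have "x \<otimes> h \<otimes> inv x \<in> lower_central G i"
      using normal.inv_op_closed2[OF Suc.IH x gh(2)] .
    ultimately show ?thesis using x gh by (auto simp: commutators_with_def)
  qed
  show ?case unfolding lower_central_Suc
    by (rule generate_normal[OF commutators_with_in_carrier[OF lower_central_in_carrier] conj])
qed

lemma lower_central_conj [simp]:
  "x \<in> carrier G \<Longrightarrow> y \<in> lower_central G i \<Longrightarrow> x \<otimes> y \<otimes> inv x \<in> lower_central G i"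
  using normal.inv_op_closed2[OF lower_central_normal] .

lemma lower_central_mult [simp]:
  "x \<in> lower_central G i \<Longrightarrow> y \<in> lower_central G i \<Longrightarrow> x \<otimes> y \<in> lower_central G i"
  using subgroup.m_closed[OF lower_central_subgroup] .

lemma lower_central_inv [simp]: "x \<in> lower_central G i \<Longrightarrow> inv x \<in> lower_central G i"
  using subgroup.m_inv_closed[OF lower_central_subgroup] .

text \<open>For N normal and y fixed, the elements commuting with y modulo N form a subgroup.
  This lets us check a commutator condition on generators only.\<close>
lemma commutator_mod_normal_subgroup:
  assumes N: "N \<lhd> G" and y: "y \<in> carrier G"
  shows "subgroup {x \<in> carrier G. commutator G x y \<in> N} G"
proof (rule subgroupI)
  have sub: "subgroup N G" using normal_imp_subgroup[OF N] .
  show "{x \<in> carrier G. commutator G x y \<in> N} \<noteq> {}"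
    using y subgroup.one_closed[OF sub] by (auto intro!: exI[of _ \<one>] simp: commutator_def)
  fix a b assume a: "a \<in> {x \<in> carrier G. commutator G x y \<in> N}"
    and b: "b \<in> {x \<in> carrier G. commutator G x y \<in> N}"
  have "commutator G (inv a) y = inv a \<otimes> inv (commutator G a y) \<otimes> inv (inv a)"
    using a y by (simp add: word_normalize)
  then show "inv a \<in> {x \<in> carrier G. commutator G x y \<in> N}"
    using a normal.inv_op_closed2[OF N, of "inv a"] subgroup.m_inv_closed[OF sub] by auto
  have "commutator G (a \<otimes> b) y = (a \<otimes> commutator G b y \<otimes> inv a) \<otimes> commutator G a y"
    using a b y by (simp add: word_normalize)
  then show "a \<otimes> b \<in> {x \<in> carrier G. commutator G x y \<in> N}"
    using a b normal.inv_op_closed2[OF N, of a] subgroup.m_closed[OF sub] by auto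
qed auto

lemma displacement_mod_normal_subgroup:
  assumes f: "f \<in> hom G G" and N: "N \<lhd> G"
  shows "subgroup {x \<in> carrier G. f x \<otimes> inv x \<in> N} G"
proof (rule subgroupI)
  have sub: "subgroup N G" using normal_imp_subgroup[OF N] .
  interpret f: group_hom G G f using f by (simp add: group_hom_def group_hom_axioms_def is_group)
  show "{x \<in> carrier G. f x \<otimes> inv x \<in> N} \<noteq> {}"
    using subgroup.one_closed[OF sub] by (auto intro!: exI[of _ \<one>])
  fix a b assume a: "a \<in> {x \<in> carrier G. f x \<otimes> inv x \<in> N}"
    and b: "b \<in> {x \<in> carrier G. f x \<otimes> inv x \<in> N}"
  have fa: "f a \<in> carrier G" and fb: "f b \<in> carrier G" using a b by auto
  have "f (inv a) \<otimes> inv (inv a) = inv a \<otimes> inv (f a \<otimes> inv a) \<otimes> inv (inv a)"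
    using a fa by (simp add: word_normalize)
  then show "inv a \<in> {x \<in> carrier G. f x \<otimes> inv x \<in> N}"
    using a fa normal.inv_op_closed2[OF N, of "inv a"] subgroup.m_inv_closed[OF sub] by auto
  have "f (a \<otimes> b) \<otimes> inv (a \<otimes> b) = (f a \<otimes> inv a) \<otimes> (a \<otimes> (f b \<otimes> inv b) \<otimes> inv a)"
    using a b fa fb by (simp add: word_normalize)
  then show "a \<otimes> b \<in> {x \<in> carrier G. f x \<otimes> inv x \<in> N}"
    using a b fa fb normal.inv_op_closed2[OF N, of a] subgroup.m_closed[OF sub] by auto
qed auto

lemma generate_in_subgroup_predicate:
  assumes "subgroup {x \<in> carrier G. P x} G" "H \<subseteq> carrier G" "\<And>h. h \<in> H \<Longrightarrow> P h"
    and "x \<in> generate G H"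
  shows "P x"
  using generate_subgroup_incl[OF _ assms(1), of H] assms(2-4) by blast

section \<open>The three subgroup lemma and descent of displacements\<close>

text \<open>The Hall-Witt identity, in the rearranged form used to prove the three subgroup lemma.\<close>
lemma hall_witt:
  assumes "g \<in> carrier G" "h \<in> carrier G" "w \<in> carrier G"
  shows "commutator G (commutator G g h) w =
    g \<otimes> inv ((w \<otimes> commutator G (commutator G (inv w) (inv g)) h \<otimes> inv w) \<otimes>
      (h \<otimes> commutator G (commutator G (inv h) w) (inv g) \<otimes> inv h)) \<otimes> inv g"
  using assms by (simp add: word_normalize)

lemma commutator_lower_central:
  "x \<in> lower_central G i \<Longrightarrow> y \<in> lower_central G j \<Longrightarrow> commutator G x y \<in> lower_central G (i + j + 1)"
proof (induction i arbitrary: j x y)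
  case 0 then show ?case using commutator_mem_lower_central by simp
next
  case (Suc i)
  let ?N = "lower_central G (Suc i + j + 1)"
  have y: "y \<in> lower_central G j" "y \<in> carrier G" using Suc.prems by auto
  show ?case
  proof (rule generate_in_subgroup_predicate[where P = "\<lambda>x. commutator G x y \<in> ?N"])
    show "subgroup {x \<in> carrier G. commutator G x y \<in> ?N} G"
      by (rule commutator_mod_normal_subgroup[OF lower_central_normal y(2)])
    show "commutators_with G (lower_central G i) \<subseteq> carrier G"
      by (rule commutators_with_in_carrier[OF lower_central_in_carrier])
    show "x \<in> generate G (commutators_with G (lower_central G i))"
      using Suc.prems(1) by (simp only: lower_central_Suc)
  next
    fix e assume "e \<in> commutators_with G (lower_central G i)"
    then obtain g h where gh: "g \<in> carrier G" "h \<in> lower_central G i" "e = commutator G g h"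
      by (auto simp: commutators_with_def)
    have u: "commutator G (inv y) (inv g) \<in> lower_central G (j + 1)"
      using lower_central_inv[OF commutator_mem_lower_central[of "inv g" "inv y" j]] gh y
        inv_commutator by simp
    have "commutator G (commutator G (inv y) (inv g)) h \<in> ?N"
      using lower_central_inv[OF Suc.IH[OF gh(2) u]] inv_commutator[of h] gh y
      by (simp add: add.commute add.left_commute)
    then have t1: "y \<otimes> commutator G (commutator G (inv y) (inv g)) h \<otimes> inv y \<in> ?N"
      using y by simp
    have "commutator G (inv h) y \<in> lower_central G (i + j + 1)"
      using Suc.IH[where x = "inv h" and j = j and y = y] gh y by simp
    then have "commutator G (commutator G (inv h) y) (inv g) \<in> ?N"
      using lower_central_inv[OF commutator_mem_lower_central[of "inv g"]] gh y inv_commutator by simp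
    then have t2: "h \<otimes> commutator G (commutator G (inv h) y) (inv g) \<otimes> inv h \<in> ?N"
      using gh by simp
    show "commutator G e y \<in> ?N"
      unfolding gh(3) hall_witt[OF gh(1) lower_central_mem_carrier[OF gh(2)] y(2)]
      using t1 t2 gh by simp
  qed
qed

lemma derived_eq_lower_central_1: "derived G (carrier G) = lower_central G 1"
  by (simp add: derived_def lower_central_Suc commutators_with_def commutator_def)

text \<open>Perturbing both entries of e = [g, h] to [a g, b h] changes it by a product of
  commutators involving a and b; each of them lies one step deeper in the series.\<close>
lemma perturbed_commutator:
  assumes "a \<in> carrier G" "g \<in> carrier G" "b \<in> carrier G" "h \<in> carrier G"
    and e: "e = commutator G g h"
  shows "commutator G (a \<otimes> g) (b \<otimes> h) \<otimes> inv e = commutator G (a \<otimes> g) b \<otimes>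
    (b \<otimes> (commutator G a e \<otimes> (e \<otimes> commutator G a h \<otimes> inv e) \<otimes> commutator G e (inv b)) \<otimes> inv b)"
  using assms by (simp add: word_normalize)

lemma displacement_lower_central:
  assumes f: "f \<in> hom G G"
    and trivial: "\<And>x. x \<in> carrier G \<Longrightarrow> f x \<otimes> inv x \<in> lower_central G 1"
  shows "x \<in> lower_central G j \<Longrightarrow> f x \<otimes> inv x \<in> lower_central G (Suc j)"
proof (induction j arbitrary: x)
  case 0 then show ?case using trivial by simp
next
  case (Suc j)
  let ?N = "lower_central G (Suc (Suc j))"
  interpret f: group_hom G G f using f by (simp add: group_hom_def group_hom_axioms_def is_group)
  show ?case
  proof (rule generate_in_subgroup_predicate[where P = "\<lambda>x. f x \<otimes> inv x \<in> ?N"])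
    show "subgroup {x \<in> carrier G. f x \<otimes> inv x \<in> ?N} G"
      by (rule displacement_mod_normal_subgroup[OF f lower_central_normal])
    show "commutators_with G (lower_central G j) \<subseteq> carrier G"
      by (rule commutators_with_in_carrier[OF lower_central_in_carrier])
    show "x \<in> generate G (commutators_with G (lower_central G j))"
      using Suc.prems(1) by (simp only: lower_central_Suc)
  next
    fix e assume "e \<in> commutators_with G (lower_central G j)"
    then obtain g h where gh: "g \<in> carrier G" "h \<in> lower_central G j" "e = commutator G g h"
      by (auto simp: commutators_with_def)
    have hc: "h \<in> carrier G" and ec: "e \<in> carrier G" using gh by auto
    define a where "a = f g \<otimes> inv g"
    define b where "b = f h \<otimes> inv h"
    have a1: "a \<in> lower_central G 1" unfolding a_def using trivial gh by simp
    have b1: "b \<in> lower_central G (Suc j)" unfolding b_def using Suc.IH gh by simp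
    have ac: "a \<in> carrier G" and bc: "b \<in> carrier G" using a1 b1 by auto
    have "f g = a \<otimes> g" "f h = b \<otimes> h" using gh hc by (simp_all add: a_def b_def m_assoc)
    then have "f e = commutator G (a \<otimes> g) (b \<otimes> h)"
      using gh hc by (simp add: commutator_def)
    then have expand: "f e \<otimes> inv e = commutator G (a \<otimes> g) b \<otimes>
        (b \<otimes> (commutator G a e \<otimes> (e \<otimes> commutator G a h \<otimes> inv e) \<otimes> commutator G e (inv b)) \<otimes> inv b)"
      using perturbed_commutator[OF ac gh(1) bc hc gh(3)] by simp
    have e1: "e \<in> lower_central G (Suc j)" using commutator_mem_lower_central gh by simp
    have "commutator G (a \<otimes> g) b \<in> ?N" using commutator_mem_lower_central[OF _ b1] ac gh by simp
    moreover have "commutator G a e \<in> ?N" using commutator_mem_lower_central[OF ac e1] .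
    moreover have "commutator G a h \<in> ?N" using commutator_lower_central[OF a1 gh(2)] by simp
    moreover have "commutator G e (inv b) \<in> ?N"
      using commutator_mem_lower_central[OF ec lower_central_inv[OF b1]] .
    ultimately show "f e \<otimes> inv e \<in> ?N" unfolding expand using ec bc by simp
  qed
qed

end

section \<open>Word length\<close>

context group
begin

lemma word_value_closed: "set ws \<subseteq> carrier G \<Longrightarrow> foldr (\<otimes>) ws \<one> \<in> carrier G"
  by (induction ws) auto

lemma word_value_append:
  assumes "set ws \<subseteq> carrier G" "set vs \<subseteq> carrier G"
  shows "foldr (\<otimes>) (ws @ vs) \<one> = foldr (\<otimes>) ws \<one> \<otimes> foldr (\<otimes>) vs \<one>"
  using assms by (induction ws) (auto simp: m_assoc word_value_closed)

lemma word_exists: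
  assumes S: "S \<subseteq> carrier G" and x: "x \<in> generate G S"
  shows "\<exists>ws. set ws \<subseteq> S \<union> m_inv G ` S \<and> foldr (\<otimes>) ws \<one> = x"
  using x
proof (induction x rule: generate.induct)
  case one then show ?case by (intro exI[of _ "[]"]) simp
next
  case (incl h) then show ?case by (intro exI[of _ "[h]"]) (use S in auto)
next
  case (inv h) then show ?case by (intro exI[of _ "[inv h]"]) (use S in auto)
next
  case (eng h1 h2)
  then obtain ws vs where "set ws \<subseteq> S \<union> m_inv G ` S" "foldr (\<otimes>) ws \<one> = h1"
    "set vs \<subseteq> S \<union> m_inv G ` S" "foldr (\<otimes>) vs \<one> = h2" by blast
  moreover have "S \<union> m_inv G ` S \<subseteq> carrier G" using S by auto
  ultimately show ?case
    by (intro exI[of _ "ws @ vs"]) (simp add: word_value_append[of ws vs] subset_trans del: foldr_append)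
qed

lemma word_length_le:
  "set ws \<subseteq> S \<union> m_inv G ` S \<Longrightarrow> foldr (\<otimes>) ws \<one> = x \<Longrightarrow> word_length G S x \<le> length ws"
  unfolding word_length_def by (rule Least_le) auto

lemma word_length_attained:
  assumes S: "S \<subseteq> carrier G" "generate G S = carrier G" and x: "x \<in> carrier G"
  obtains ws where "length ws = word_length G S x" "set ws \<subseteq> S \<union> m_inv G ` S" "foldr (\<otimes>) ws \<one> = x"
proof -
  have "\<exists>n ws. length ws = n \<and> set ws \<subseteq> S \<union> m_inv G ` S \<and> foldr (\<otimes>) ws \<one> = x"
    using word_exists[OF S(1)] S(2) x by auto
  from LeastI_ex[OF this] show ?thesis using that unfolding word_length_def by blast
qed

lemma word_length_mult:
  assumes S: "S \<subseteq> carrier G" "generate G S = carrier G" and xy: "x \<in> carrier G" "y \<in> carrier G"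
  shows "word_length G S (x \<otimes> y) \<le> word_length G S x + word_length G S y"
proof -
  obtain ws where ws: "length ws = word_length G S x" "set ws \<subseteq> S \<union> m_inv G ` S" "foldr (\<otimes>) ws \<one> = x"
    using word_length_attained[OF S xy(1)] .
  obtain vs where vs: "length vs = word_length G S y" "set vs \<subseteq> S \<union> m_inv G ` S" "foldr (\<otimes>) vs \<one> = y"
    using word_length_attained[OF S xy(2)] .
  have "S \<union> m_inv G ` S \<subseteq> carrier G" using S by auto
  then have "foldr (\<otimes>) (ws @ vs) \<one> = x \<otimes> y"
    using ws vs word_value_append[of ws vs] by (simp add: subset_trans del: foldr_append)
  then have "word_length G S (x \<otimes> y) \<le> length (ws @ vs)" using ws vs by (intro word_length_le) auto
  then show ?thesis using ws vs by simp
qed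

lemma word_length_one: "word_length G S \<one> = 0"
  using word_length_le[of "[]" S \<one>] by simp

lemma word_length_pos:
  assumes S: "S \<subseteq> carrier G" "generate G S = carrier G" and x: "x \<in> carrier G" "x \<noteq> \<one>"
  shows "1 \<le> word_length G S x"
proof -
  obtain ws where "length ws = word_length G S x" "foldr (\<otimes>) ws \<one> = x"
    using word_length_attained[OF S x(1)] by metis
  then show ?thesis using x(2) by (cases ws) auto
qed

section \<open>Polynomial growth under a unipotent endomorphism\<close>

lemma funpow_hom:
  assumes f: "f \<in> hom G G" shows "f ^^ n \<in> hom G G"
proof (induction n)
  case 0 show ?case by (auto intro: homI)
next
  case (Suc n) show ?case
    by (rule homI) (simp_all add: hom_in_carrier[OF f] hom_in_carrier[OF Suc] hom_mult[OF f] hom_mult[OF Suc])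
qed

lemma funpow_inj_ne_one:
  assumes f: "f \<in> hom G G" "inj_on f (carrier G)" and x: "x \<in> carrier G" "x \<noteq> \<one>"
  shows "(f ^^ n) x \<noteq> \<one>"
proof (induction n)
  case (Suc n)
  have "(f ^^ n) x \<in> carrier G" using hom_in_carrier[OF funpow_hom[OF f(1)] x(1)] .
  then show ?case using Suc hom_one[OF f(1) is_group is_group] inj_on_eq_iff[OF f(2) _ one_closed] by auto
qed (use x in simp)

end

lemma telescoping_bound:
  fixes a :: "nat \<Rightarrow> nat"
  assumes step: "\<And>n. a (Suc n) \<le> a n + A * (n + 1) ^ m"
  shows "a n \<le> (a 0 + A) * (n + 1) ^ Suc m"
proof -
  have sum: "a n \<le> a 0 + n * A * (n + 1) ^ m" for n
  proof (induction n)
    case (Suc n)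
    have "(n + 1) ^ m \<le> (Suc n + 1) ^ m" by (rule power_mono) auto
    then have "n * A * (n + 1) ^ m + A * (n + 1) ^ m \<le> n * A * (Suc n + 1) ^ m + A * (Suc n + 1) ^ m"
      by (intro add_mono mult_le_mono2)
    also have "\<dots> = Suc n * A * (Suc n + 1) ^ m" by (simp add: algebra_simps)
    finally have "n * A * (n + 1) ^ m + A * (n + 1) ^ m \<le> Suc n * A * (Suc n + 1) ^ m" .
    then show ?case using Suc step[of n] by linarith
  qed simp
  have "1 \<le> (n + 1) ^ Suc m" by (rule one_le_power) simp
  then have "a 0 \<le> a 0 * (n + 1) ^ Suc m" using mult_le_mono2[of 1 _ "a 0"] by simp
  moreover have "n * A * (n + 1) ^ m \<le> A * (n + 1) ^ Suc m" by (simp add: algebra_simps)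
  ultimately show ?thesis using sum[of n] by (simp add: algebra_simps)
qed

context group
begin

lemma word_length_growth_lower_central:
  assumes S: "S \<subseteq> carrier G" "generate G S = carrier G"
    and f: "f \<in> hom G G"
    and trivial: "\<And>x. x \<in> carrier G \<Longrightarrow> f x \<otimes> inv x \<in> lower_central G 1"
    and nil: "lower_central G c = {\<one>}"
    and k: "k \<le> c"
  shows "\<forall>x \<in> lower_central G k. \<exists>A. \<forall>n. word_length G S ((f ^^ n) x) \<le> A * (n + 1) ^ (c - k)"
  using k
proof (induction k rule: inc_induct)
  case base
  have "(f ^^ n) \<one> = \<one>" for n using hom_one[OF funpow_hom[OF f] is_group is_group] .
  then show ?case using nil by (simp add: word_length_one)
next
  case (step k)
  show ?case
  proof
    fix x assume x: "x \<in> lower_central G k"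
    have xc: "x \<in> carrier G" and fx: "f x \<in> carrier G" using x hom_in_carrier[OF f] by auto
    define d where "d = f x \<otimes> inv x"
    have d: "d \<in> lower_central G (Suc k)" unfolding d_def using displacement_lower_central[OF f trivial x] .
    then obtain A where A: "\<And>n. word_length G S ((f ^^ n) d) \<le> A * (n + 1) ^ (c - Suc k)"
      using step.IH by blast
    have "word_length G S ((f ^^ Suc n) x) \<le> word_length G S ((f ^^ n) x) + A * (n + 1) ^ (c - Suc k)" for n
    proof -
      have "(f ^^ Suc n) x = (f ^^ n) (d \<otimes> x)"
        using xc fx by (simp add: d_def m_assoc funpow_Suc_right del: funpow.simps)
      also have "\<dots> = (f ^^ n) d \<otimes> (f ^^ n) x"
        using hom_mult[OF funpow_hom[OF f]] d xc by simp
      finally show ?thesis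
        using word_length_mult[OF S, of "(f ^^ n) d" "(f ^^ n) x"] A[of n] d xc
          hom_in_carrier[OF funpow_hom[OF f]] by fastforce
    qed
    moreover have "Suc (c - Suc k) = c - k" using step.hyps by simp
    ultimately show "\<exists>A. \<forall>n. word_length G S ((f ^^ n) x) \<le> A * (n + 1) ^ (c - k)"
      using telescoping_bound[where a = "\<lambda>n. word_length G S ((f ^^ n) x)"] by metis
  qed
qed

end

lemma root_polynomially_bounded_tendsto_1:
  fixes a :: "nat \<Rightarrow> real"
  assumes lower: "\<And>n. 1 \<le> a n" and upper: "\<And>n. a n \<le> A * (real n + 1) ^ d"
  shows "(\<lambda>n. root n (a n)) \<longlonglongrightarrow> 1"
proof (rule real_tendsto_sandwich[where f = "\<lambda>n. 1" and h = "\<lambda>n. root n (A * 2 ^ d) * root n (real n) ^ d"])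
  have A: "1 \<le> A" using lower[of 0] upper[of 0] by simp
  show "\<forall>\<^sub>F n in sequentially. 1 \<le> root n (a n)"
    using eventually_gt_at_top[of 0] by eventually_elim (use lower real_root_ge_1_iff in blast)
  show "\<forall>\<^sub>F n in sequentially. root n (a n) \<le> root n (A * 2 ^ d) * root n (real n) ^ d"
    using eventually_gt_at_top[of 0]
  proof eventually_elim
    case (elim n)
    have "(real n + 1) ^ d \<le> (2 * real n) ^ d" using elim by (intro power_mono) auto
    then have "A * (real n + 1) ^ d \<le> A * (2 * real n) ^ d" using A by (intro mult_left_mono) auto
    then have "a n \<le> A * 2 ^ d * real n ^ d"
      using upper[of n] by (simp add: power_mult_distrib mult.assoc)
    then have "root n (a n) \<le> root n (A * 2 ^ d * real n ^ d)" using elim by simp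
    also have "\<dots> = root n (A * 2 ^ d) * root n (real n) ^ d"
      using elim by (simp add: real_root_mult real_root_power)
    finally show ?case .
  qed
  have "(\<lambda>n. root n (A * 2 ^ d) * root n (real n) ^ d) \<longlonglongrightarrow> 1 * 1 ^ d"
    using A by (intro tendsto_mult tendsto_power LIMSEQ_root LIMSEQ_root_const) simp
  then show "(\<lambda>n. root n (A * 2 ^ d) * root n (real n) ^ d) \<longlonglongrightarrow> 1" by simp
qed simp

section \<open>Entropy of homologically trivial automorphisms\<close>

context group
begin

lemma entropy_seq_tendsto:
  assumes S: "finite_generating_set G S" and s: "s \<in> S"
    and f: "f \<in> hom G G" "inj_on f (carrier G)"
    and trivial: "homologically_trivial G f"
    and nil: "lower_central G c = {\<one>}"
  shows "entropy_seq G S f s \<longlonglongrightarrow> (if s = \<one> then 0 else 1)"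
proof (cases "s = \<one>")
  case True
  have "(f ^^ n) \<one> = \<one>" for n using hom_one[OF funpow_hom[OF f(1)] is_group is_group] .
  then have "entropy_seq G S f s = (\<lambda>n. 0)"
    using True by (simp add: entropy_seq_def[abs_def] word_length_one)
  then show ?thesis using True by simp
next
  case False
  have gen: "S \<subseteq> carrier G" "generate G S = carrier G" and sc: "s \<in> carrier G"
    using S s by (auto simp: finite_generating_set_def)
  have triv: "\<And>x. x \<in> carrier G \<Longrightarrow> f x \<otimes> inv x \<in> lower_central G 1"
    using trivial by (simp add: homologically_trivial_def derived_eq_lower_central_1)
  obtain A where A: "\<And>n. word_length G S ((f ^^ n) s) \<le> A * (n + 1) ^ c"
    using word_length_growth_lower_central[OF gen f(1) triv nil, of 0] sc by auto
  have "(\<lambda>n. root n (real (word_length G S ((f ^^ n) s)))) \<longlonglongrightarrow> 1"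
  proof (rule root_polynomially_bounded_tendsto_1)
    show "1 \<le> real (word_length G S ((f ^^ n) s))" for n
      using word_length_pos[OF gen hom_in_carrier[OF funpow_hom[OF f(1)] sc]
          funpow_inj_ne_one[OF f sc False]] by simp
    show "real (word_length G S ((f ^^ n) s)) \<le> real A * (real n + 1) ^ c" for n
    proof -
      have "real (word_length G S ((f ^^ n) s)) \<le> real (A * (n + 1) ^ c)"
        using A[of n] by (simp only: of_nat_le_iff)
      then show ?thesis by (simp add: add.commute)
    qed
  qed
  then show ?thesis using False by (simp add: entropy_seq_def[abs_def])
qed

lemma generating_set_nontrivial:
  assumes "finite_generating_set G S" "carrier G \<noteq> {\<one>}"
  obtains s where "s \<in> S" "s \<noteq> \<one>"
proof -
  have "\<not> S \<subseteq> {\<one>}"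
  proof
    assume "S \<subseteq> {\<one>}"
    then have "generate G S \<subseteq> {\<one>}" using generate_subgroup_incl[OF _ triv_subgroup] by blast
    then show False using assms subgroup.one_closed[OF subgroup_self]
      by (auto simp: finite_generating_set_def)
  qed
  then show ?thesis using that by blast
qed

end

theorem corollary1p4:
  fixes N :: "('a, 'b) monoid_scheme" and \<phi> :: "'a \<Rightarrow> 'a" and S :: "'a set"
  assumes "group N"
    and "nilpotent_group N"
    and "torsion_free N"
    and "finite_generating_set N S"
    and "carrier N \<noteq> {\<one>\<^bsub>N\<^esub>}"
    and "\<phi> \<in> iso N N"
    and "homologically_trivial N \<phi>"
  shows "(\<forall>s \<in> S. convergent (entropy_seq N S \<phi> s)) \<and> entropy N S \<phi> = 1"
proof -
  interpret group N by fact
  have f: "\<phi> \<in> hom N N" "inj_on \<phi> (carrier N)"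
    using assms(6) by (auto simp: iso_def bij_betw_imp_inj_on)
  obtain c where c: "lower_central N c = {\<one>\<^bsub>N\<^esub>}"
    using assms(2) by (auto simp: nilpotent_group_def)
  have limit: "entropy_seq N S \<phi> s \<longlonglongrightarrow> (if s = \<one>\<^bsub>N\<^esub> then 0 else 1)" if "s \<in> S" for s
    using entropy_seq_tendsto[OF assms(4) that f assms(7) c] .
  obtain s0 where s0: "s0 \<in> S" "s0 \<noteq> \<one>\<^bsub>N\<^esub>"
    using generating_set_nontrivial[OF assms(4,5)] .
  have "finite S" using assms(4) by (simp add: finite_generating_set_def)
  then have "entropy N S \<phi> = 1"
    unfolding entropy_def using limI[OF limit] s0 by (intro Max_eqI) (auto intro: rev_image_eqI)
  then show ?thesis using limit by (auto simp: convergent_def)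
qed

end
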